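(* If $u_\beta$ has affine factor complexity, then $t_m=1$.
   Context: $\beta>1$ is a simple Parry number with $d_\beta(1)=t_1\cdots t_m$, $m\ge2$, nonnegative integer digits, $t_1\ge1$, $t_m\ge1$, satisfying the Parry condition ($t_i\cdots t_m0^\omega$ lexicographically strictly smaller than $t_1\cdots t_m0^\omega$ for $2\le i\le m$). $\varphi$ is the substitution on $\mathcal A=\{0,\dots,m-1\}$ with $\varphi(k)=0^{t_{k+1}}(k+1)$ for $0\le k\le m-2$, $\varphi(m-1)=0^{t_m}$, and $u_\beta=\lim_n\varphi^n(0)$ is its fixed point. Affine factor complexity means that the number $\mathcal C(n)$ of factors of $u_\beta$ of length $n$ equals $an+b$ for all $n\in\mathbb N$, for some constants $a,b$. *)

theory Defs
  imports Complex_Main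
begin

text \<open>Digit strings t = t_1 ... t_m are lists; t ! (i-1) is t_i.
  pad t is the infinite sequence t_1 ... t_m 0^omega (indexed from 0).\<close>

definition pad :: "nat list \<Rightarrow> nat \<Rightarrow> nat" where
  "pad t k = (if k < length t then t ! k else 0)"

definition lex_less :: "(nat \<Rightarrow> nat) \<Rightarrow> (nat \<Rightarrow> nat) \<Rightarrow> bool" where
  "lex_less f g \<longleftrightarrow> (\<exists>k. (\<forall>j<k. f j = g j) \<and> f k < g k)"

definition parry_condition :: "nat list \<Rightarrow> bool" where
  "parry_condition t \<longleftrightarrow> (\<forall>i. 1 \<le> i \<and> i < length t \<longrightarrow> lex_less (pad (drop i t)) (pad t))"

definition beta_map :: "real \<Rightarrow> real \<Rightarrow> real" where
  "beta_map \<beta> x = \<beta> * x - of_int \<lfloor>\<beta> * x\<rfloor>"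

definition renyi_digit :: "real \<Rightarrow> nat \<Rightarrow> int" where
  "renyi_digit \<beta> k = \<lfloor>\<beta> * (beta_map \<beta> ^^ k) 1\<rfloor>"

definition d_beta_one_eq :: "real \<Rightarrow> nat list \<Rightarrow> bool" where
  "d_beta_one_eq \<beta> t \<longleftrightarrow> (\<forall>k. renyi_digit \<beta> k = int (pad t k))"

definition subst_phi :: "nat list \<Rightarrow> nat \<Rightarrow> nat list" where
  "subst_phi t k = (if k + 1 < length t then replicate (t ! k) 0 @ [k + 1]
                    else replicate (t ! (length t - 1)) 0)"

definition subst_word :: "nat list \<Rightarrow> nat list \<Rightarrow> nat list" where
  "subst_word t w = concat (map (subst_phi t) w)"

text \<open>u_beta = lim phi^n(0): the infinite word having every phi^n(0) as a prefix.\<close>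
definition u_beta :: "nat list \<Rightarrow> nat \<Rightarrow> nat" where
  "u_beta t = (SOME u. \<forall>n i. i < length ((subst_word t ^^ n) [0]) \<longrightarrow>
                                u i = (subst_word t ^^ n) [0] ! i)"

definition factors :: "(nat \<Rightarrow> 'a) \<Rightarrow> nat \<Rightarrow> 'a list set" where
  "factors u n = {w. \<exists>i. w = map u [i..<i + n]}"

definition factor_complexity :: "(nat \<Rightarrow> 'a) \<Rightarrow> nat \<Rightarrow> nat" where
  "factor_complexity u n = card (factors u n)"

definition affine_complexity :: "(nat \<Rightarrow> 'a) \<Rightarrow> bool" where
  "affine_complexity u \<longleftrightarrow>
     (\<exists>a b :: real. \<forall>n. real (factor_complexity u n) = a * real n + b)"

end

theory Submission
  imports Defs "HOL-Library.Sublist"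
begin

text \<open>Suppose \<open>t\<^sub>m \<ge> 2\<close>; the Parry condition then gives \<open>t\<^sub>1 \<ge> t\<^sub>m \<ge> 2\<close>.
  Put \<open>T = t\<^sub>1\<close>. The prefix \<open>p = 0^T 1 = \<phi>(0)\<close> of \<open>u\<^sub>\<beta>\<close> is preceded by every letter:
  \<open>c p\<close> occurs in \<open>\<phi>((c-1) 0)\<close> for \<open>c \<ge> 1\<close>, and \<open>0 p\<close> occurs in
  \<open>\<phi>((m-1) 0) = 0^(t\<^sub>m + T) 1\<close>. Because \<open>t\<^sub>m \<ge> 2\<close>, that word also contains \<open>0^(T+2)\<close>,
  so \<open>0^(T+1)\<close> is preceded both by \<open>0\<close> and by the nonzero letter in front of a maximal
  run of zeros. As every factor has some left extension,
  \<open>C(T+2) - C(T+1) = \<Sum>\<^sub>w (#ext(w) - 1) \<ge> (m - 1) + 1\<close>, while \<open>C(1) - C(0) \<le> m - 1\<close>,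
  so the complexity cannot be affine.\<close>

definition left_extensions :: "(nat \<Rightarrow> 'a) \<Rightarrow> 'a list \<Rightarrow> 'a set" where
  "left_extensions u w = {a. a # w \<in> factors u (Suc (length w))}"

lemma length_factors: "w \<in> factors u n \<Longrightarrow> length w = n"
  by (auto simp: factors_def)

lemma factors_0: "factors u 0 = {[]}"
  by (simp add: factors_def)

lemma factors_1: "factors u 1 = (\<lambda>a. [a]) ` range u"
  by (auto simp: factors_def)

lemma finite_factors:
  assumes "finite (range u)"
  shows "finite (factors u n)"
proof (rule finite_subset)
  show "factors u n \<subseteq> {w. set w \<subseteq> range u \<and> length w = n}"
    by (auto simp: factors_def)
  show "finite {w. set w \<subseteq> range u \<and> length w = n}"
    using assms by (rule finite_lists_length_eq)
qed

lemma tl_in_factors: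
  assumes "v \<in> factors u (Suc n)"
  shows "tl v \<in> factors u n"
proof -
  obtain i where "v = map u [i..<i + Suc n]"
    using assms by (auto simp: factors_def)
  then have "tl v = map u [Suc i..<Suc i + n]"
    by (simp add: upt_rec[of i] del: upt_Suc)
  then show ?thesis
    unfolding factors_def by blast
qed

lemma letter_in_left_extensions: "u i \<in> left_extensions u (map u [Suc i..<Suc i + n])"
  unfolding left_extensions_def factors_def by (auto simp: upt_rec[of i] intro!: exI[of _ i])

lemma left_extensions_nonempty:
  assumes "left_extensions u (map u [0..<n]) \<noteq> {}" and "w \<in> factors u n"
  shows "left_extensions u w \<noteq> {}"
proof -
  obtain i where w: "w = map u [i..<i + n]"
    using assms(2) by (auto simp: factors_def)
  show ?thesis
  proof (cases i)
    case 0
    with assms(1) w show ?thesis by simp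
  next
    case (Suc k)
    with w letter_in_left_extensions[of u k n] show ?thesis by blast
  qed
qed

lemma finite_left_extensions:
  assumes "finite (range u)"
  shows "finite (left_extensions u w)"
proof (rule finite_subset[OF _ assms])
  show "left_extensions u w \<subseteq> range u"
    by (auto simp: left_extensions_def factors_def Cons_eq_map_conv simp del: upt_Suc)
qed

lemma card_factors_Suc:
  assumes "finite (range u)"
  shows "card (factors u (Suc n)) = (\<Sum>w\<in>factors u n. card (left_extensions u w))"
proof -
  have "factors u (Suc n) = (\<Union>w\<in>factors u n. (\<lambda>a. a # w) ` left_extensions u w)"
  proof (intro equalityI subsetI)
    fix v assume v: "v \<in> factors u (Suc n)"
    then obtain a w where "v = a # w" by (cases v) (auto dest: length_factors)
    with v show "v \<in> (\<Union>w\<in>factors u n. (\<lambda>a. a # w) ` left_extensions u w)"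
      using tl_in_factors[OF v] length_factors[OF v] by (auto simp: left_extensions_def)
  qed (auto simp: left_extensions_def dest: length_factors)
  also have "card \<dots> = (\<Sum>w\<in>factors u n. card ((\<lambda>a. a # w) ` left_extensions u w))"
    by (rule card_UN_disjoint) (auto simp: finite_factors[OF assms] finite_left_extensions[OF assms])
  also have "\<dots> = (\<Sum>w\<in>factors u n. card (left_extensions u w))"
    by (simp add: card_image inj_on_def)
  finally show ?thesis .
qed

lemma card_factors_Suc_ge:
  assumes "finite (range u)" and "left_extensions u (map u [0..<n]) \<noteq> {}"
    and "p \<in> factors u n" and "z \<in> factors u n" and "p \<noteq> z"
  shows "card (factors u n) + card (left_extensions u p) + card (left_extensions u z)
           \<le> card (factors u (Suc n)) + 2"
proof -
  let ?F = "factors u n" and ?e = "\<lambda>w. card (left_extensions u w)"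
  have fin: "finite ?F"
    using assms(1) by (rule finite_factors)
  have "1 \<le> ?e w" if "w \<in> ?F" for w
  proof -
    have "left_extensions u w \<noteq> {}"
      using left_extensions_nonempty[OF assms(2) that] .
    then show ?thesis
      using finite_left_extensions[OF assms(1)] by (simp add: Suc_le_eq card_gt_0_iff)
  qed
  then have rest: "card (?F - {p, z}) \<le> (\<Sum>w\<in>?F - {p, z}. ?e w)"
    using sum_mono[of "?F - {p, z}" "\<lambda>_. 1" ?e] by simp
  have pz: "{p, z} \<subseteq> ?F"
    using assms(3,4) by simp
  have "(\<Sum>w\<in>?F. ?e w) = (\<Sum>w\<in>?F - {p, z}. ?e w) + (\<Sum>w\<in>{p, z}. ?e w)"
    using pz fin by (rule sum.subset_diff)
  also have "(\<Sum>w\<in>{p, z}. ?e w) = ?e p + ?e z"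
    using assms(5) by simp
  finally have split: "(\<Sum>w\<in>?F. ?e w) = (\<Sum>w\<in>?F - {p, z}. ?e w) + ?e p + ?e z"
    by simp
  have "card (?F - {p, z}) = card ?F - 2"
    using card_Diff_subset[OF _ pz] assms(5) by simp
  moreover have "2 \<le> card ?F"
    using card_mono[OF fin pz] assms(5) by simp
  ultimately show ?thesis
    using rest split card_factors_Suc[OF assms(1), of n] by linarith
qed

lemma factor_complexity_0: "factor_complexity u 0 = 1"
  by (simp add: factor_complexity_def factors_0)

lemma factor_complexity_1: "factor_complexity u 1 = card (range u)"
  unfolding factor_complexity_def factors_1 by (simp add: card_image inj_on_def)

lemma affine_complexity_increment:
  assumes "affine_complexity u"
  shows "real (factor_complexity u (Suc n)) = real (factor_complexity u n) + real (factor_complexity u 1) - 1"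
proof -
  obtain a b :: real where ab: "\<And>n. real (factor_complexity u n) = a * real n + b"
    using assms unfolding affine_complexity_def by blast
  show ?thesis
    using ab[of "Suc n"] ab[of n] ab[of 1] ab[of 0] by (simp add: factor_complexity_0 algebra_simps)
qed

lemma nonzero_left_extension_of_zero_run:
  fixes u :: "nat \<Rightarrow> 'a::zero"
  assumes "u j \<noteq> 0" and "j < i" and zero_run: "\<And>l. i \<le> l \<Longrightarrow> l < i + n \<Longrightarrow> u l = 0"
  shows "\<exists>a. a \<noteq> 0 \<and> a \<in> left_extensions u (replicate n 0)"
proof -
  define k where "k = (GREATEST l. l < i \<and> u l \<noteq> 0)"
  have k: "k < i \<and> u k \<noteq> 0"
    unfolding k_def by (rule GreatestI_nat[of _ j i]) (use assms(1,2) in auto)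
  have zero_after_k: "u l = 0" if "k < l" "l < i + n" for l
  proof (cases "l < i")
    case True
    have "l \<le> k" if "u l \<noteq> 0"
      unfolding k_def using \<open>l < i\<close> that by (intro Greatest_le_nat[where b = i]) auto
    with \<open>k < l\<close> show ?thesis by linarith
  next
    case False
    with zero_run that show ?thesis by simp
  qed
  have "map u [Suc k..<Suc k + n] = replicate n 0"
    using k by (intro replicate_eqI) (auto intro: zero_after_k)
  then have "u k \<in> left_extensions u (replicate n 0)"
    using letter_in_left_extensions[of u k n] by simp
  with k show ?thesis by blast
qed

lemma parry_last_le_first:
  assumes "2 \<le> length t" and "parry_condition t"
  shows "last t \<le> t ! 0"
proof -
  have "1 \<le> length t - 1" and "length t - 1 < length t"
    using assms(1) by auto
  then have "lex_less (pad (drop (length t - 1) t)) (pad t)"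
    using assms(2) unfolding parry_condition_def by blast
  then obtain k where "\<forall>j<k. pad (drop (length t - 1) t) j = pad t j"
      and "pad (drop (length t - 1) t) k < pad t k"
    unfolding lex_less_def by blast
  moreover have "t \<noteq> []"
    using assms(1) by auto
  then have "pad (drop (length t - 1) t) 0 = last t" and "pad t 0 = t ! 0"
    by (simp_all add: pad_def last_conv_nth)
  ultimately show ?thesis
    by (cases k) fastforce+
qed

definition phi_iterate :: "nat list \<Rightarrow> nat \<Rightarrow> nat list" where
  "phi_iterate t n = (subst_word t ^^ n) [0]"

definition occurs :: "nat list \<Rightarrow> nat list \<Rightarrow> bool" where
  "occurs t w \<longleftrightarrow> (\<exists>n. sublist w (phi_iterate t n))"

lemma subst_word_Nil [simp]: "subst_word t [] = []"
  by (simp add: subst_word_def)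

lemma subst_word_Cons [simp]: "subst_word t (a # w) = subst_phi t a @ subst_word t w"
  by (simp add: subst_word_def)

lemma subst_word_append [simp]: "subst_word t (v @ w) = subst_word t v @ subst_word t w"
  by (simp add: subst_word_def)

lemma phi_iterate_0 [simp]: "phi_iterate t 0 = [0]"
  by (simp add: phi_iterate_def)

lemma phi_iterate_Suc: "phi_iterate t (Suc n) = subst_word t (phi_iterate t n)"
  by (simp add: phi_iterate_def)

lemma subst_phi_less: "Suc k < length t \<Longrightarrow> subst_phi t k = replicate (t ! k) 0 @ [Suc k]"
  by (simp add: subst_phi_def)

lemma subst_phi_ge:
  assumes "t \<noteq> []" and "length t \<le> Suc k"
  shows "subst_phi t k = replicate (last t) 0"
proof -
  have "t ! (length t - 1) = last t"
    using assms(1) by (rule last_conv_nth[symmetric])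
  with assms(2) show ?thesis
    by (simp add: subst_phi_def)
qed

lemma sublist_subst_word: "sublist v w \<Longrightarrow> sublist (subst_word t v) (subst_word t w)"
  unfolding sublist_def by (metis subst_word_append)

lemma occurs_sublist: "occurs t w \<Longrightarrow> sublist v w \<Longrightarrow> occurs t v"
  unfolding occurs_def by (blast intro: sublist_order.order_trans)

lemma occurs_subst_word: "occurs t w \<Longrightarrow> occurs t (subst_word t w)"
  unfolding occurs_def by (metis phi_iterate_Suc sublist_subst_word)

locale beta_substitution =
  fixes t :: "nat list"
  assumes two_le_length: "2 \<le> length t"
    and first_digit_pos: "1 \<le> t ! 0"
    and last_digit_pos: "1 \<le> last t"
begin

lemma subst_phi_0: "subst_phi t 0 = replicate (t ! 0) 0 @ [1]"
  using two_le_length by (simp add: subst_phi_less)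

lemma set_subst_phi: "set (subst_phi t k) \<subseteq> {..<length t}"
  using two_le_length by (auto simp: subst_phi_def)

lemma length_subst_phi_pos: "0 < length (subst_phi t k)"
proof (cases "Suc k < length t")
  case True
  then show ?thesis by (simp add: subst_phi_less)
next
  case False
  with two_le_length have "subst_phi t k = replicate (last t) 0"
    by (intro subst_phi_ge) auto
  with last_digit_pos show ?thesis
    by simp
qed

lemma length_le_subst_word: "length w \<le> length (subst_word t w)"
proof (induction w)
  case (Cons a w)
  then show ?case
    unfolding subst_word_Cons length_append length_Cons using length_subst_phi_pos[of a] by linarith
qed simp

lemma prefix_phi_iterate_Suc: "prefix (phi_iterate t n) (phi_iterate t (Suc n))"
proof (induction n)
  case 0
  show ?case
    using first_digit_pos by (cases "t ! 0") (simp_all add: phi_iterate_Suc subst_phi_0)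
next
  case (Suc n)
  then obtain zs where "phi_iterate t (Suc n) = phi_iterate t n @ zs"
    by (auto simp: prefix_def)
  then show ?case
    by (simp add: phi_iterate_Suc prefix_def)
qed

lemma prefix_phi_iterate: "n \<le> n' \<Longrightarrow> prefix (phi_iterate t n) (phi_iterate t n')"
  by (induction n' rule: dec_induct) (auto intro: prefix_order.trans prefix_phi_iterate_Suc)

lemma length_phi_iterate: "n < length (phi_iterate t n)"
proof (induction n)
  case 0
  show ?case by simp
next
  case (Suc n)
  obtain w where w: "phi_iterate t n = 0 # w"
    using prefix_phi_iterate[of 0 n] by (auto simp: prefix_def)
  have "length w \<le> length (subst_word t w)"
    by (rule length_le_subst_word)
  with Suc w first_digit_pos show ?case
    by (simp add: phi_iterate_Suc subst_phi_0)
qed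

lemma u_beta_nth:
  assumes "i < length (phi_iterate t n)"
  shows "u_beta t i = phi_iterate t n ! i"
proof -
  have nth_eq: "phi_iterate t n ! j = phi_iterate t n' ! j"
    if "j < length (phi_iterate t n)" and "n \<le> n'" for n n' j
    using prefix_phi_iterate[OF that(2)] that(1) by (auto simp: prefix_def nth_append)
  have "phi_iterate t j ! j = phi_iterate t n ! j" if "j < length (phi_iterate t n)" for n j
  proof (cases "j \<le> n")
    case True
    then show ?thesis using nth_eq[of j j n] length_phi_iterate[of j] by simp
  next
    case False
    then show ?thesis using nth_eq[of j n j] that by simp
  qed
  then have "\<forall>n j. j < length (phi_iterate t n) \<longrightarrow> phi_iterate t j ! j = phi_iterate t n ! j"
    by blast
  then have "\<forall>n i. i < length (phi_iterate t n) \<longrightarrow> u_beta t i = phi_iterate t n ! i"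
    unfolding u_beta_def phi_iterate_def[symmetric] by (rule someI[where x = "\<lambda>j. phi_iterate t j ! j"])
  with assms show ?thesis by blast
qed

lemma set_subst_word: "set (subst_word t w) \<subseteq> {..<length t}"
  using set_subst_phi by (induction w) auto

lemma set_phi_iterate: "set (phi_iterate t n) \<subseteq> {..<length t}"
  using two_le_length set_subst_word by (cases n) (auto simp: phi_iterate_Suc)

lemma range_u_beta: "range (u_beta t) \<subseteq> {..<length t}"
  using u_beta_nth[OF length_phi_iterate] nth_mem[OF length_phi_iterate] set_phi_iterate
  by (metis image_subsetI subsetD)

lemma finite_range_u_beta: "finite (range (u_beta t))"
  using range_u_beta by (rule finite_subset) simp

lemma factor_complexity_u_beta_1: "factor_complexity (u_beta t) 1 \<le> length t"
  unfolding factor_complexity_1 using card_mono[OF _ range_u_beta] by simp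

lemma occurs_in_factors:
  assumes "occurs t w"
  shows "w \<in> factors (u_beta t) (length w)"
proof -
  obtain n xs ys where n: "phi_iterate t n = xs @ w @ ys"
    using assms by (auto simp: occurs_def sublist_def)
  have "w = map (u_beta t) [length xs..<length xs + length w]"
  proof (rule nth_equalityI)
    fix k assume "k < length w"
    then show "w ! k = map (u_beta t) [length xs..<length xs + length w] ! k"
      using u_beta_nth[of "length xs + k" n] n by (simp add: nth_append)
  qed simp
  then show ?thesis
    unfolding factors_def by blast
qed

lemma prefix_u_beta: "map (u_beta t) [0..<Suc (t ! 0)] = replicate (t ! 0) 0 @ [1]"
proof (rule nth_equalityI)
  fix i assume "i < length (map (u_beta t) [0..<Suc (t ! 0)])"
  then show "map (u_beta t) [0..<Suc (t ! 0)] ! i = (replicate (t ! 0) 0 @ [1]) ! i"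
    using u_beta_nth[of i 1] by (simp add: phi_iterate_Suc subst_phi_0 del: upt_Suc)
qed simp

lemma occurs_letter_zero:
  assumes "2 \<le> t ! 0" and "k < length t"
  shows "occurs t [k, 0]"
proof -
  obtain j where j: "t ! 0 = Suc (Suc j)"
    using assms(1) by (metis add_2_eq_Suc le_Suc_ex)
  show ?thesis
    using assms(2)
  proof (induction k)
    case 0
    have split: "phi_iterate t 1 = [] @ [0, 0] @ replicate j 0 @ [1]"
      using j by (simp add: phi_iterate_Suc subst_phi_0)
    have "sublist [0, 0] (phi_iterate t 1)"
      unfolding split by (rule sublist_appendI)
    then show ?case
      unfolding occurs_def by blast
  next
    case (Suc k)
    then have "occurs t [k, 0]"
      by simp
    then have "occurs t (subst_word t [k, 0])"
      by (rule occurs_subst_word)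
    moreover have split: "subst_word t [k, 0] = replicate (t ! k) 0 @ [Suc k, 0] @ replicate (Suc j) 0 @ [1]"
      using Suc.prems j by (simp add: subst_phi_less subst_phi_0)
    have "sublist [Suc k, 0] (subst_word t [k, 0])"
      unfolding split by (rule sublist_appendI)
    ultimately show ?case
      by (rule occurs_sublist)
  qed
qed

lemma occurs_letter_prefix:
  assumes "2 \<le> t ! 0" and "0 < c" and "c < length t"
  shows "occurs t (c # replicate (t ! 0) 0 @ [1])"
proof -
  obtain k where c: "c = Suc k"
    using assms(2) by (cases c) auto
  then have "occurs t [k, 0]"
    using assms occurs_letter_zero by simp
  then have "occurs t (subst_word t [k, 0])"
    by (rule occurs_subst_word)
  moreover have split: "subst_word t [k, 0] = replicate (t ! k) 0 @ (c # replicate (t ! 0) 0 @ [1])"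
    using assms(3) c by (simp add: subst_phi_less subst_phi_0)
  have "sublist (c # replicate (t ! 0) 0 @ [1]) (subst_word t [k, 0])"
    unfolding split by (rule sublist_append_leftI)
  ultimately show ?thesis
    by (rule occurs_sublist)
qed

lemma occurs_zeros_prefix:
  assumes "2 \<le> t ! 0"
  shows "occurs t (replicate (last t + t ! 0) 0 @ [1])"
proof -
  have "occurs t [length t - 1, 0]"
    using assms two_le_length occurs_letter_zero by simp
  then have "occurs t (subst_word t [length t - 1, 0])"
    by (rule occurs_subst_word)
  moreover have "subst_phi t (length t - 1) = replicate (last t) 0"
    using two_le_length by (intro subst_phi_ge) auto
  then have "subst_word t [length t - 1, 0] = replicate (last t + t ! 0) 0 @ [1]"
    by (simp add: subst_phi_0 replicate_add)
  ultimately show ?thesis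
    by simp
qed

lemma left_extensions_prefix:
  assumes "2 \<le> t ! 0"
  shows "{..<length t} \<subseteq> left_extensions (u_beta t) (replicate (t ! 0) 0 @ [1])"
proof
  fix c assume "c \<in> {..<length t}"
  have "occurs t (c # replicate (t ! 0) 0 @ [1])"
  proof (cases "c = 0")
    case True
    obtain j where "last t = Suc j"
      using last_digit_pos by (cases "last t") auto
    then have split: "replicate (last t + t ! 0) 0 @ [1] = replicate j 0 @ (0 # replicate (t ! 0) 0 @ [1])"
      by (simp add: replicate_add replicate_app_Cons_same)
    have "sublist (0 # replicate (t ! 0) 0 @ [1]) (replicate (last t + t ! 0) 0 @ [1])"
      unfolding split by (rule sublist_append_leftI)
    with True show ?thesis
      using occurs_sublist[OF occurs_zeros_prefix[OF assms]] by blast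
  next
    case False
    with assms \<open>c \<in> {..<length t}\<close> show ?thesis
      using occurs_letter_prefix by blast
  qed
  from occurs_in_factors[OF this] show "c \<in> left_extensions (u_beta t) (replicate (t ! 0) 0 @ [1])"
    by (simp add: left_extensions_def)
qed

lemma zero_run_in_factors:
  assumes "2 \<le> t ! 0" and "2 \<le> last t"
  shows "replicate (Suc (Suc (t ! 0))) 0 \<in> factors (u_beta t) (Suc (Suc (t ! 0)))"
proof -
  let ?T = "t ! 0"
  have "last t + ?T = (last t - 2) + Suc (Suc ?T)"
    using assms(2) by simp
  then have split: "replicate (last t + ?T) 0 @ [1] = replicate (last t - 2) 0 @ replicate (Suc (Suc ?T)) 0 @ [1]"
    by (simp only: replicate_add append_assoc)
  have "sublist (replicate (Suc (Suc ?T)) 0) (replicate (last t + ?T) 0 @ [1])"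
    unfolding split by (rule sublist_appendI)
  with occurs_zeros_prefix[OF assms(1)] have "occurs t (replicate (Suc (Suc ?T)) 0)"
    by (rule occurs_sublist)
  from occurs_in_factors[OF this] show ?thesis
    by simp
qed

lemma card_left_extensions_zero_run:
  assumes "2 \<le> t ! 0" and "2 \<le> last t"
  shows "2 \<le> card (left_extensions (u_beta t) (replicate (Suc (t ! 0)) 0))"
proof -
  let ?u = "u_beta t" and ?T = "t ! 0"
  have zeros_factor: "replicate (Suc (Suc ?T)) 0 \<in> factors ?u (Suc (Suc ?T))"
    using assms by (rule zero_run_in_factors)
  then obtain i where run: "map ?u [i..<i + Suc (Suc ?T)] = replicate (Suc (Suc ?T)) 0"
    by (auto simp: factors_def)
  have zero: "?u l = 0" if "i \<le> l" "l < i + Suc (Suc ?T)" for l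
  proof -
    have "?u l \<in> set (map ?u [i..<i + Suc (Suc ?T)])"
      using that by (simp del: upt_Suc)
    then show ?thesis
      unfolding run by auto
  qed
  have "0 \<in> left_extensions ?u (replicate (Suc ?T) 0)"
    using zeros_factor by (simp add: left_extensions_def)
  moreover obtain a where "a \<noteq> 0" "a \<in> left_extensions ?u (replicate (Suc ?T) 0)"
  proof -
    have "?u ?T = 1"
      using prefix_u_beta nth_map_upt[of ?T "Suc ?T" 0 ?u] by (simp add: nth_append del: upt_Suc)
    then have "?T < i"
      using zero[of ?T] by (cases "i \<le> ?T") auto
    moreover have "?u l = 0" if "i \<le> l" and "l < i + Suc ?T" for l
      using zero that by simp
    ultimately have "\<exists>a. a \<noteq> 0 \<and> a \<in> left_extensions ?u (replicate (Suc ?T) 0)"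
      using \<open>?u ?T = 1\<close> by (intro nonzero_left_extension_of_zero_run) simp_all
    then show ?thesis
      using that by blast
  qed
  ultimately have "{0, a} \<subseteq> left_extensions ?u (replicate (Suc ?T) 0)"
    by simp
  then have "card {0, a} \<le> card (left_extensions ?u (replicate (Suc ?T) 0))"
    by (rule card_mono[OF finite_left_extensions[OF finite_range_u_beta]])
  with \<open>a \<noteq> 0\<close> show ?thesis
    by simp
qed

lemma factor_complexity_jump:
  assumes "2 \<le> t ! 0" and "2 \<le> last t"
  shows "factor_complexity (u_beta t) (Suc (t ! 0)) + length t
           \<le> factor_complexity (u_beta t) (Suc (Suc (t ! 0)))"
proof -
  let ?u = "u_beta t" and ?p = "replicate (t ! 0) 0 @ [1::nat]" and ?z = "replicate (Suc (t ! 0)) (0::nat)"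
  have ext_p: "{..<length t} \<subseteq> left_extensions ?u ?p"
    using assms(1) by (rule left_extensions_prefix)
  with two_le_length have "0 \<in> left_extensions ?u ?p"
    by auto
  then have "left_extensions ?u (map ?u [0..<Suc (t ! 0)]) \<noteq> {}"
    unfolding prefix_u_beta by blast
  moreover have "?p \<in> factors ?u (Suc (t ! 0))"
    unfolding factors_def mem_Collect_eq by (rule exI[of _ 0]) (simp add: prefix_u_beta del: upt_Suc)
  moreover have "?z \<in> factors ?u (Suc (t ! 0))"
    using tl_in_factors[OF zero_run_in_factors[OF assms]] by simp
  moreover have "?p \<noteq> ?z"
    by (simp add: replicate_append_same[symmetric])
  ultimately have "card (factors ?u (Suc (t ! 0))) + card (left_extensions ?u ?p)
      + card (left_extensions ?u ?z) \<le> card (factors ?u (Suc (Suc (t ! 0)))) + 2"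
    by (rule card_factors_Suc_ge[OF finite_range_u_beta])
  moreover have "length t \<le> card (left_extensions ?u ?p)"
    using card_mono[OF finite_left_extensions[OF finite_range_u_beta] ext_p] by simp
  moreover have "2 \<le> card (left_extensions ?u ?z)"
    using assms by (rule card_left_extensions_zero_run)
  ultimately show ?thesis
    unfolding factor_complexity_def by linarith
qed

end

theorem corollary4:
  fixes \<beta> :: real and t :: "nat list"
  assumes "\<beta> > 1"
    and "length t \<ge> 2"
    and "t ! 0 \<ge> 1"
    and "last t \<ge> 1"
    and "parry_condition t"
    and "d_beta_one_eq \<beta> t"
    and "affine_complexity (u_beta t)"
  shows "last t = 1"
proof (rule ccontr)
  assume "last t \<noteq> 1"
  with assms(4) have last: "2 \<le> last t"
    by simp
  with parry_last_le_first[OF assms(2,5)] have first: "2 \<le> t ! 0"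
    by simp
  interpret beta_substitution t
    using assms(2-4) by unfold_locales
  let ?C = "\<lambda>n. real (factor_complexity (u_beta t) n)"
  have "?C (Suc (t ! 0)) + length t \<le> ?C (Suc (Suc (t ! 0)))"
    using factor_complexity_jump[OF first last] by linarith
  moreover have "?C (Suc (Suc (t ! 0))) = ?C (Suc (t ! 0)) + ?C 1 - 1"
    using assms(7) by (rule affine_complexity_increment)
  moreover have "?C 1 \<le> length t"
    using factor_complexity_u_beta_1 by simp
  ultimately show False
    by linarith
qed

end
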